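(* Let $m\geq 15$ and $k\geq 1$ be integers and let $c(x)=1+\sum_{j\in\{2,3,4,7\}}(x^j+x^{m-j})\in\mathbb{F}_2[x]$. Then $\gcd(c(x^k),x^m-1)=1$ if and only if $\gcd(m,3k)=\gcd(m,5k)=\gcd(m,k)$.
   Context: All polynomials are over $\mathbb{F}_2$. *)

theory Defs
  imports "HOL-Library.Z2" "HOL-Computational_Algebra.Polynomial"
begin

definition c_poly :: "nat \<Rightarrow> bit poly" where
  "c_poly m = 1 + (\<Sum>j\<in>{2,3,4,7::nat}. monom 1 j + monom 1 (m - j))"

end

theory Submission
  imports Defs "HOL-Computational_Algebra.Polynomial_Factorial" "HOL-Computational_Algebra.Field_as_Ring"
begin

text \<open>Write \<open>z = x^k\<close> and \<open>\<Phi>p(z) = 1 + z + ... + z^(p-1)\<close>, and work modulo \<open>x^m - 1\<close>,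
  where \<open>z^m = 1\<close>. Multiplying \<open>c(z)\<close> by the unit \<open>z^7\<close> gives
  \<open>1 + z^3 + z^4 + z^5 + z^7 + z^9 + z^10 + z^11 + z^14\<close>, which over \<open>F\<^sub>2\<close> equals
  \<open>\<Phi>3(z) \<Phi>5(z)^3\<close>. So \<open>c(z)\<close> is coprime to \<open>x^m - 1\<close> iff \<open>\<Phi>3(z)\<close> and \<open>\<Phi>5(z)\<close> are.

  Let \<open>p\<close> be a prime that is a unit of the field. A common factor of \<open>\<Phi>p(x^k)\<close> and \<open>x^m - 1\<close>
  divides \<open>x^(pk) - 1\<close>, hence \<open>x^gcd(m,pk) - 1\<close>. If \<open>gcd(m,pk) = gcd(m,k)\<close> it therefore divides
  \<open>x^k - 1\<close>, which is coprime to \<open>\<Phi>p(x^k)\<close> because \<open>\<Phi>p(1) = p\<close>. Otherwise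
  \<open>gcd(m,pk) = p g\<close> with \<open>g = gcd(m,k)\<close>, and the nonconstant \<open>\<Phi>p(x^g)\<close> divides both
  \<open>x^m - 1\<close> and \<open>\<Phi>p(x^k)\<close>.\<close>

text \<open>\<open>F\<^sub>2\<close> as a Euclidean ring with gcd, so that \<open>F\<^sub>2[x]\<close> inherits the gcd structure of
  polynomials over a field.\<close>

instantiation bit ::
  "{unique_euclidean_ring, normalization_euclidean_semiring, normalization_semidom_multiplicative}"
begin

definition [simp]: "normalize_bit = (normalize_field :: bit \<Rightarrow> _)"
definition [simp]: "unit_factor_bit = (unit_factor_field :: bit \<Rightarrow> _)"
definition [simp]: "euclidean_size_bit = (euclidean_size_field :: bit \<Rightarrow> _)"
definition [simp]: "division_segment (x :: bit) = 1"

instance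
  by standard (auto simp: modulo_bit_def)

end

instantiation bit :: euclidean_ring_gcd
begin

definition "gcd_bit = (Euclidean_Algorithm.gcd :: bit \<Rightarrow> _)"
definition "lcm_bit = (Euclidean_Algorithm.lcm :: bit \<Rightarrow> _)"
definition "Gcd_bit = (Euclidean_Algorithm.Gcd :: bit set \<Rightarrow> _)"
definition "Lcm_bit = (Euclidean_Algorithm.Lcm :: bit set \<Rightarrow> _)"

instance
  by standard (simp_all add: gcd_bit_def lcm_bit_def Gcd_bit_def Lcm_bit_def)

end

instance bit :: field_gcd ..

lemma power_mult_diff_one_eq:
  fixes y :: "'a::comm_ring_1"
  shows "y ^ (p * k) - 1 = (y ^ k - 1) * (\<Sum>i<p. (y ^ k) ^ i)"
  unfolding mult.commute[of p k] power_mult by (rule power_diff_1_eq)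

lemma power_diff_one_dvd:
  fixes y :: "'a::comm_ring_1"
  assumes "a dvd b"
  shows "y ^ a - 1 dvd y ^ b - 1"
proof -
  obtain c where "b = c * a"
    using assms by (metis dvdE mult.commute)
  then show ?thesis
    by (simp add: power_mult_diff_one_eq)
qed

lemma dvd_power_diff_one_gcd:
  fixes y d :: "'a::comm_ring_1"
  assumes "d dvd y ^ a - 1" and "d dvd y ^ b - 1"
  shows "d dvd y ^ gcd a b - 1"
  using assms
proof (induction a b rule: gcd_nat_induct)
  case (step a b)
  have "y ^ a - 1 = y ^ (a mod b) * (y ^ (b * (a div b)) - 1) + (y ^ (a mod b) - 1)"
    by (simp add: algebra_simps flip: power_add)
  moreover have "d dvd y ^ (b * (a div b)) - 1"
    using step.prems(2) power_diff_one_dvd[of b "b * (a div b)" y] dvd_trans by auto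
  ultimately have "d dvd y ^ (a mod b) - 1"
    using step.prems(1) by (metis dvd_add_right_iff dvd_mult)
  then show ?case
    using step.IH step.prems(2) by (metis gcd_red_nat)
qed simp

lemma coprime_iff_of_dvd_diff:
  fixes a b n :: "'a::{comm_ring_1,algebraic_semidom}"
  assumes "n dvd a - b"
  shows "coprime a n \<longleftrightarrow> coprime b n"
proof -
  have "d dvd a \<longleftrightarrow> d dvd b" if "d dvd n" for d
  proof -
    have "d dvd a - b"
      using that assms by (rule dvd_trans)
    then show ?thesis
      using dvd_add_right_iff[of d "a - b" b] by simp
  qed
  then show ?thesis
    unfolding coprime_def by blast
qed

lemma coprime_geometric_sum_diff_one:
  fixes y :: "'a::{comm_ring_1,algebraic_semidom}"
  assumes "is_unit (of_nat p :: 'a)"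
  shows "coprime (\<Sum>i<p. y ^ i) (y - 1)"
proof (rule coprimeI)
  fix d assume d_sum: "d dvd (\<Sum>i<p. y ^ i)" and d_diff: "d dvd y - 1"
  have "y - 1 dvd (\<Sum>i<p. y ^ i - 1)"
    by (intro dvd_sum) (metis power_one_right power_diff_one_dvd one_dvd)
  then have "d dvd (\<Sum>i<p. y ^ i) - of_nat p"
    using d_diff by (simp add: sum_subtractf dvd_trans)
  from dvd_diff[OF d_sum this] have "d dvd of_nat p"
    by simp
  then show "is_unit d"
    using assms dvd_unit_imp_unit by blast
qed

lemma coprime_geometric_sum_power_diff_one:
  fixes y :: "'a::{comm_ring_1,algebraic_semidom}"
  assumes "is_unit (of_nat p :: 'a)" and "gcd m (p * k) = gcd m k"
  shows "coprime (\<Sum>i<p. (y ^ k) ^ i) (y ^ m - 1)"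
proof (rule coprimeI)
  fix d assume d_sum: "d dvd (\<Sum>i<p. (y ^ k) ^ i)" and d_m: "d dvd y ^ m - 1"
  have "d dvd y ^ (p * k) - 1"
    using d_sum by (simp add: power_mult_diff_one_eq)
  then have "d dvd y ^ gcd m k - 1"
    using dvd_power_diff_one_gcd[OF d_m] assms(2) by metis
  then have "d dvd y ^ k - 1"
    using power_diff_one_dvd[of "gcd m k" k y] dvd_trans by auto
  then show "is_unit d"
    using coprime_geometric_sum_diff_one[OF assms(1), of "y ^ k"] d_sum coprime_common_divisor by blast
qed

lemma geometric_sum_power_dvd:
  fixes y :: "'a::ring_gcd"
  assumes "is_unit (of_nat p :: 'a)" and "gcd (p * g) k = g"
  shows "(\<Sum>i<p. (y ^ g) ^ i) dvd (\<Sum>i<p. (y ^ k) ^ i)"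
proof -
  have "coprime (\<Sum>i<p. (y ^ g) ^ i) (y ^ k - 1)"
  proof (rule coprimeI)
    fix d assume d_sum: "d dvd (\<Sum>i<p. (y ^ g) ^ i)" and d_k: "d dvd y ^ k - 1"
    have "d dvd y ^ (p * g) - 1"
      using d_sum by (simp add: power_mult_diff_one_eq)
    then have "d dvd y ^ g - 1"
      using dvd_power_diff_one_gcd[OF _ d_k] assms(2) by metis
    then show "is_unit d"
      using coprime_geometric_sum_diff_one[OF assms(1), of "y ^ g"] d_sum coprime_common_divisor by blast
  qed
  moreover have "y ^ (p * g) - 1 dvd y ^ (p * k) - 1"
    using assms(2) by (intro power_diff_one_dvd) (metis gcd_dvd2 mult_dvd_mono dvd_refl)
  then have "(\<Sum>i<p. (y ^ g) ^ i) dvd (\<Sum>i<p. (y ^ k) ^ i) * (y ^ k - 1)"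
    unfolding power_mult_diff_one_eq by (metis dvd_mult_right mult.commute)
  ultimately show ?thesis
    by (simp add: coprime_dvd_mult_left_iff)
qed

lemma gcd_mult_prime_cases:
  fixes p m k :: nat
  assumes "prime p"
  shows "gcd m (p * k) = gcd m k \<or> gcd m (p * k) = p * gcd m k"
proof -
  have "gcd m k dvd gcd m (p * k)"
    by (simp add: gcd_mono)
  then obtain r where r: "gcd m (p * k) = gcd m k * r" ..
  have "gcd m (p * k) dvd gcd (p * m) (p * k)"
    by (simp add: gcd_mono)
  then have "gcd m k * r dvd gcd m k * p"
    by (metis r gcd_mult_distrib_nat mult.commute)
  then have "r dvd p \<or> gcd m k = 0"
    by auto
  then show ?thesis
    using r assms by (auto simp: prime_nat_iff)
qed

lemma degree_x_power_diff_one: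
  "degree ([:0, 1::'a::comm_ring_1:] ^ n - 1) = n"
proof (cases "n = 0")
  case False
  have deg: "degree ([:0, 1::'a:] ^ n) = n"
    by (rule degree_linear_power)
  have "degree ([:0, 1::'a:] ^ n + (- 1)) = degree ([:0, 1::'a:] ^ n)"
    by (rule degree_add_eq_left) (use False deg in simp)
  then show ?thesis
    using deg by simp
qed simp

lemma not_is_unit_geometric_sum_x_power:
  assumes "p \<ge> 2" and "g > 0"
  shows "\<not> is_unit (\<Sum>i<p. ([:0, 1::'a::field:] ^ g) ^ i)"
proof
  let ?x = "[:0, 1::'a:]" and ?S = "\<Sum>i<p. ([:0, 1::'a:] ^ g) ^ i"
  assume "is_unit ?S"
  then obtain S' where "?S * S' = 1"
    by (auto elim: dvdE)
  then have "?x ^ g - 1 = (?x ^ (p * g) - 1) * S'"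
    by (simp add: power_mult_diff_one_eq mult.assoc)
  then have "?x ^ (p * g) - 1 dvd ?x ^ g - 1"
    by (rule dvdI)
  moreover have "?x ^ g - 1 \<noteq> 0"
    using degree_x_power_diff_one[of g] assms(2) by (metis degree_0 neq0_conv)
  ultimately have "p * g \<le> g"
    using dvd_imp_degree_le degree_x_power_diff_one by metis
  then show False
    using assms mult_le_cancel2[of p g 1] by simp
qed

lemma coprime_geometric_sum_x_power_iff:
  fixes p m k :: nat
  assumes "prime p" and "of_nat p \<noteq> (0::'a::field_gcd)"
  shows "coprime (\<Sum>i<p. ([:0, 1::'a:] ^ k) ^ i) ([:0, 1:] ^ m - 1) \<longleftrightarrow> gcd m (p * k) = gcd m k"
proof
  let ?x = "[:0, 1::'a:]"
  have unit: "is_unit (of_nat p :: 'a poly)"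
    using assms(2) by (simp add: of_nat_poly is_unit_const_poly_iff dvd_field_iff)
  show "gcd m (p * k) = gcd m k \<Longrightarrow> coprime (\<Sum>i<p. (?x ^ k) ^ i) (?x ^ m - 1)"
    by (rule coprime_geometric_sum_power_diff_one[OF unit])
  assume coprime: "coprime (\<Sum>i<p. (?x ^ k) ^ i) (?x ^ m - 1)"
  show "gcd m (p * k) = gcd m k"
  proof (rule ccontr)
    define g where "g = gcd m k"
    let ?S = "\<Sum>i<p. (?x ^ g) ^ i"
    assume "gcd m (p * k) \<noteq> gcd m k"
    then have pg: "gcd m (p * k) = p * g" and "g > 0"
      using gcd_mult_prime_cases[OF assms(1)] by (auto simp: g_def)
    have "gcd (p * g) k = g"
      unfolding g_def pg[unfolded g_def, symmetric] by (simp add: gcd.assoc)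
    then have "?S dvd (\<Sum>i<p. (?x ^ k) ^ i)"
      by (rule geometric_sum_power_dvd[OF unit])
    moreover have "?x ^ (p * g) - 1 dvd ?x ^ m - 1"
      by (rule power_diff_one_dvd) (metis pg gcd_dvd1)
    then have "?S dvd ?x ^ m - 1"
      unfolding power_mult_diff_one_eq by (metis dvd_mult_right)
    ultimately have "is_unit ?S"
      using coprime coprime_common_divisor by blast
    moreover have "\<not> is_unit ?S"
      using prime_ge_2_nat[OF assms(1)] \<open>g > 0\<close> by (rule not_is_unit_geometric_sum_x_power)
    ultimately show False
      by contradiction
  qed
qed

lemma pcompose_power: "pcompose (p ^ n) q = pcompose p q ^ n"
  by (induction n) (simp_all add: pcompose_mult pcompose_1)

lemma pcompose_monom_one: "pcompose (monom (1::'a::comm_ring_1) n) q = q ^ n"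
  by (simp add: monom_altdef pcompose_power pcompose_pCons)

lemma sum3_mult_sum5_cube_char_2:
  fixes z :: "'a::comm_ring_1"
  assumes "(2::'a) = 0"
  shows "(\<Sum>i<3. z ^ i) * (\<Sum>i<5. z ^ i) ^ 3
    = 1 + z^3 + z^4 + z^5 + z^7 + z^9 + z^10 + z^11 + z^14"
proof -
  have "(\<Sum>i<3. z ^ i) * (\<Sum>i<5. z ^ i) ^ 3 = (1 + z + z^2) * (1 + z + z^2 + z^3 + z^4) ^ 3"
    by (simp add: eval_nat_numeral)
  also have "\<dots> = (1 + z^3 + z^4 + z^5 + z^7 + z^9 + z^10 + z^11 + z^14) +
    2 * (2*z + 5*z^2 + 9*z^3 + 15*z^4 + 21*z^5 + 26*z^6 + 27*z^7 + 26*z^8 + 21*z^9 + 15*z^10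
      + 9*z^11 + 5*z^12 + 2*z^13)"
    by (simp add: algebra_simps power3_eq_cube power2_eq_square eval_nat_numeral)
  finally show ?thesis
    using assms by simp
qed

lemma c_poly_pcompose_congruence:
  fixes q :: "bit poly"
  assumes "m \<ge> 7"
  shows "q ^ 7 * pcompose (c_poly m) q - (\<Sum>i<3. q ^ i) * (\<Sum>i<5. q ^ i) ^ 3
    = (q ^ m - 1) * (1 + q ^ 3 + q ^ 4 + q ^ 5)"
proof -
  have reflect: "q ^ 7 * q ^ (m - j) = q ^ m * q ^ (7 - j)" if "j \<le> 7" for j
  proof -
    have "7 + (m - j) = m + (7 - j)"
      using that assms by simp
    then show ?thesis
      by (metis power_add)
  qed
  have "q ^ 7 * pcompose (c_poly m) q
    = q ^ 7 + q ^ 9 + q ^ 10 + q ^ 11 + q ^ 14 + q ^ m * (1 + q ^ 3 + q ^ 4 + q ^ 5)"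
    unfolding c_poly_def
    using reflect[of 2] reflect[of 3] reflect[of 4] reflect[of 7]
    by (simp add: pcompose_add pcompose_sum pcompose_1 pcompose_monom_one algebra_simps
        flip: power_add)
  moreover have "(\<Sum>i<3. q ^ i) * (\<Sum>i<5. q ^ i) ^ 3
    = 1 + q^3 + q^4 + q^5 + q^7 + q^9 + q^10 + q^11 + q^14"
    by (rule sum3_mult_sum5_cube_char_2) (simp add: numeral_poly)
  ultimately show ?thesis
    by (simp add: algebra_simps)
qed

theorem proposition6:
  fixes m k :: nat
  assumes "m \<ge> 15" and "k \<ge> 1"
  shows "coprime (pcompose (c_poly m) (monom 1 k)) (monom 1 m - 1)
    \<longleftrightarrow> (gcd m (3 * k) = gcd m k \<and> gcd m (5 * k) = gcd m k)"
proof -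
  define x where "x = [:0, 1::bit:]"
  define q where "q = x ^ k"
  have "x ^ m - 1 dvd q ^ m - 1"
    unfolding q_def power_mult[symmetric] by (rule power_diff_one_dvd) simp
  then have "x ^ m - 1 dvd q ^ 7 * pcompose (c_poly m) q - (\<Sum>i<3. q ^ i) * (\<Sum>i<5. q ^ i) ^ 3"
    using c_poly_pcompose_congruence[of m q] assms(1) by simp
  then have "coprime (q ^ 7 * pcompose (c_poly m) q) (x ^ m - 1)
      \<longleftrightarrow> coprime ((\<Sum>i<3. q ^ i) * (\<Sum>i<5. q ^ i) ^ 3) (x ^ m - 1)"
    by (rule coprime_iff_of_dvd_diff)
  moreover have "coprime (x ^ m - 1) x"
    using coprime_diff_one_left[of "x ^ m"] assms(1) by simp
  then have "coprime q (x ^ m - 1)"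
    by (simp add: q_def coprime_commute)
  ultimately have "coprime (pcompose (c_poly m) q) (x ^ m - 1)
      \<longleftrightarrow> coprime (\<Sum>i<3. q ^ i) (x ^ m - 1) \<and> coprime (\<Sum>i<5. q ^ i) (x ^ m - 1)"
    by simp
  moreover have "coprime (\<Sum>i<3. q ^ i) (x ^ m - 1) \<longleftrightarrow> gcd m (3 * k) = gcd m k"
    and "coprime (\<Sum>i<5. q ^ i) (x ^ m - 1) \<longleftrightarrow> gcd m (5 * k) = gcd m k"
    unfolding q_def x_def by (rule coprime_geometric_sum_x_power_iff; simp)+
  moreover have "pcompose (c_poly m) (monom 1 k) = pcompose (c_poly m) q"
    and "monom 1 m - 1 = x ^ m - 1"
    by (simp_all add: q_def x_def monom_altdef)
  ultimately show ?thesis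
    by simp
qed

end
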